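(* The Lie ideal $\operatorname{Im}\psi_0$ of the Lie algebra $\operatorname{Ker}\psi_1$ and the Lie ideal $\operatorname{Ad}_{E^e}(\Lambda)$ of $\operatorname{Der}_{E^e}(\Lambda)$ (inner derivations of $\Lambda$ which are $E$-bimodule morphisms) are isomorphic Lie algebras.
   Context: Let $k$ be an algebraically closed field and $Q$ a finite quiver; $Q_n$ is the set of paths of length $n$ ($Q_0$ = vertices, $Q_1$ = arrows), $s(\gamma),t(\gamma)$ are source and terminus of a path $\gamma$; in $kQ$, $\beta\alpha$ is the concatenation "first $\alpha$, then $\beta$" if $t(\alpha)=s(\beta)$, and $0$ otherwise. Let $Z$ be a minimal set of paths of length $\ge 2$ (no proper subpath of an element of $Z$ lies in $Z$) such that $\Lambda=kQ/\langle Z\rangle$ is finite dimensional; $E\subset\Lambda$ is the subalgebra spanned by the vertices. Let $B$ be the set of paths (vertices included) not containing any element of $Z$ as a subpath. Paths are parallel if they have the same source and terminus; $X//Y$ is the set of pairs of parallel paths in $X\times Y$ and $k(X//Y)$ the vector space with basis $X//Y$. For a path $\varepsilon$ and $(a,\gamma)\in Q_1//B$, $\varepsilon^{(a,\gamma)}$ is the sum of all paths in $B$ obtained by replacing one occurrence of $a$ in $\varepsilon$ by $\gamma$ ($0$ if none), and $(\eta,\varepsilon^{(a,\gamma)})=\sum_i(\eta,\varepsilon_i)$ if $\varepsilon^{(a,\gamma)}=\sum_i\varepsilon_i$. Maps: $\psi_0:k(Q_0//B)\to k(Q_1//B)$, $(e,\gamma)\mapsto\sum_{a\in Q_1,\ s(a)=e,\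 a\gamma\in B}(a,a\gamma)-\sum_{a\in Q_1,\ t(a)=e,\ \gamma a\in B}(a,\gamma a)$; $\psi_1:k(Q_1//B)\to k(Z//B)$, $(a,\gamma)\mapsto\sum_{p\in Z}(p,p^{(a,\gamma)})$. $k(Q_1//B)$ carries the bilinear bracket $[(a,\gamma),(b,\varepsilon)]=(b,\varepsilon^{(a,\gamma)})-(a,\gamma^{(b,\varepsilon)})$, for which $\operatorname{Ker}\psi_1$ is a Lie subalgebra and $\operatorname{Im}\psi_0$ a Lie ideal of it. *)

theory Defs
  imports "HOL-Library.Sublist" "HOL-Computational_Algebra.Polynomial"
begin

definition alg_closed :: "'k::field itself \<Rightarrow> bool" where
  "alg_closed _ \<longleftrightarrow> (\<forall>p::'k poly. 0 < degree p \<longrightarrow> (\<exists>x. poly p x = 0))"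

text \<open>A path is a pair (v, as): v is its source vertex and as the list of its
  arrows in the order in which they are traversed.  Thus (v, []) is the trivial path
  at v, and the path usually written alpha_n ... alpha_1 is (s(alpha_1), [alpha_1,...,alpha_n]).\<close>

type_synonym ('v,'a) path = "'v \<times> 'a list"

definition psrc :: "('v,'a) path \<Rightarrow> 'v" where
  "psrc p = fst p"

definition ptgt :: "('a \<Rightarrow> 'v) \<Rightarrow> ('v,'a) path \<Rightarrow> 'v" where
  "ptgt tgt p = (if snd p = [] then fst p else tgt (last (snd p)))"

definition valid_path :: "'v set \<Rightarrow> 'a set \<Rightarrow> ('a \<Rightarrow> 'v) \<Rightarrow> ('a \<Rightarrow> 'v) \<Rightarrow> ('v,'a) path \<Rightarrow> bool" where
  "valid_path Q0 Q1 src tgt p \<longleftrightarrow>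
     fst p \<in> Q0 \<and> set (snd p) \<subseteq> Q1 \<and>
     (snd p \<noteq> [] \<longrightarrow> src (hd (snd p)) = fst p) \<and>
     (\<forall>i. Suc i < length (snd p) \<longrightarrow> tgt (snd p ! i) = src (snd p ! Suc i))"

text \<open>Concatenation: pcat beta alpha is "first alpha, then beta" (only used when composable).\<close>
definition pcat :: "('v,'a) path \<Rightarrow> ('v,'a) path \<Rightarrow> ('v,'a) path" where
  "pcat beta alpha = (fst alpha, snd alpha @ snd beta)"

definition arr :: "('a \<Rightarrow> 'v) \<Rightarrow> 'a \<Rightarrow> ('v,'a) path" where
  "arr src a = (src a, [a])"

definition Bset :: "'v set \<Rightarrow> 'a set \<Rightarrow> ('a \<Rightarrow> 'v) \<Rightarrow> ('a \<Rightarrow> 'v) \<Rightarrow> ('v,'a) path set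
                     \<Rightarrow> ('v,'a) path set" where
  "Bset Q0 Q1 src tgt Z = {d. valid_path Q0 Q1 src tgt d \<and> \<not> (\<exists>p\<in>Z. sublist (snd p) (snd d))}"

text \<open>Elements of Lambda are k-valued coefficient functions supported on B.\<close>
definition lam_space :: "('v,'a) path set \<Rightarrow> (('v,'a) path \<Rightarrow> 'k::field) set" where
  "lam_space B = {x. \<forall>d. d \<notin> B \<longrightarrow> x d = 0}"

definition lam_mult :: "('v,'a) path set \<Rightarrow> ('a \<Rightarrow> 'v)
     \<Rightarrow> (('v,'a) path \<Rightarrow> 'k::field) \<Rightarrow> (('v,'a) path \<Rightarrow> 'k) \<Rightarrow> (('v,'a) path \<Rightarrow> 'k)" where
  "lam_mult B tgt x y = (\<lambda>d. if d \<in> B then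
      (\<Sum>(beta, alpha) \<in> {(beta, alpha). beta \<in> B \<and> alpha \<in> B \<and> ptgt tgt alpha = psrc beta
                                  \<and> pcat beta alpha = d}. x beta * y alpha)
      else 0)"

definition E_space :: "('v,'a) path set \<Rightarrow> (('v,'a) path \<Rightarrow> 'k::field) set" where
  "E_space B = {x \<in> lam_space B. \<forall>d. snd d \<noteq> [] \<longrightarrow> x d = 0}"

definition is_E_derivation :: "('v,'a) path set \<Rightarrow> ('a \<Rightarrow> 'v)
     \<Rightarrow> ((('v,'a) path \<Rightarrow> 'k::field) \<Rightarrow> (('v,'a) path \<Rightarrow> 'k)) \<Rightarrow> bool" where
  "is_E_derivation B tgt D \<longleftrightarrow>
     (\<forall>x \<in> lam_space B. D x \<in> lam_space B) \<and>
     (\<forall>x \<in> lam_space B. \<forall>y \<in> lam_space B. D (\<lambda>d. x d + y d) = (\<lambda>d. D x d + D y d)) \<and>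
     (\<forall>c. \<forall>x \<in> lam_space B. D (\<lambda>d. c * x d) = (\<lambda>d. c * D x d)) \<and>
     (\<forall>x \<in> lam_space B. \<forall>y \<in> lam_space B.
        D (lam_mult B tgt x y) = (\<lambda>d. lam_mult B tgt (D x) y d + lam_mult B tgt x (D y) d)) \<and>
     (\<forall>u \<in> E_space B. \<forall>w \<in> E_space B. \<forall>x \<in> lam_space B.
        D (lam_mult B tgt u (lam_mult B tgt x w)) = lam_mult B tgt u (lam_mult B tgt (D x) w))"

text \<open>Inner derivation ad_x = [x, -], as a map on Lambda (zero outside Lambda).\<close>
definition ad_map :: "('v,'a) path set \<Rightarrow> ('a \<Rightarrow> 'v)
     \<Rightarrow> (('v,'a) path \<Rightarrow> 'k::field) \<Rightarrow> (('v,'a) path \<Rightarrow> 'k) \<Rightarrow> (('v,'a) path \<Rightarrow> 'k)" where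
  "ad_map B tgt x = (\<lambda>y. if y \<in> lam_space B
       then (\<lambda>d. lam_mult B tgt x y d - lam_mult B tgt y x d) else (\<lambda>d. 0))"

definition Ad_E :: "('v,'a) path set \<Rightarrow> ('a \<Rightarrow> 'v)
     \<Rightarrow> ((('v,'a) path \<Rightarrow> 'k::field) \<Rightarrow> (('v,'a) path \<Rightarrow> 'k)) set" where
  "Ad_E B tgt = {D. \<exists>x \<in> lam_space B. D = ad_map B tgt x \<and> is_E_derivation B tgt D}"

definition comm_bracket :: "(('y \<Rightarrow> 'k::field) \<Rightarrow> ('y \<Rightarrow> 'k)) \<Rightarrow> (('y \<Rightarrow> 'k) \<Rightarrow> ('y \<Rightarrow> 'k))
     \<Rightarrow> (('y \<Rightarrow> 'k) \<Rightarrow> ('y \<Rightarrow> 'k))" where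
  "comm_bracket D1 D2 = (\<lambda>y. \<lambda>d. D1 (D2 y) d - D2 (D1 y) d)"

type_synonym ('v,'a,'k) pvec = "(('v,'a) path \<times> ('v,'a) path) \<Rightarrow> 'k"

definition pt :: "'x \<Rightarrow> 'x \<Rightarrow> 'k::field" where
  "pt p = (\<lambda>q. if q = p then 1 else 0)"

text \<open>Q0//B (vertices as trivial paths) and Q1//B (arrows as paths of length 1).\<close>
definition Q0B :: "'v set \<Rightarrow> ('a \<Rightarrow> 'v) \<Rightarrow> ('v,'a) path set \<Rightarrow> (('v,'a) path \<times> ('v,'a) path) set" where
  "Q0B Q0 tgt B = {((e, []), g) | e g. e \<in> Q0 \<and> g \<in> B \<and> psrc g = e \<and> ptgt tgt g = e}"

definition Q1B :: "'a set \<Rightarrow> ('a \<Rightarrow> 'v) \<Rightarrow> ('a \<Rightarrow> 'v) \<Rightarrow> ('v,'a) path set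
                     \<Rightarrow> (('v,'a) path \<times> ('v,'a) path) set" where
  "Q1B Q1 src tgt B = {(arr src a, g) | a g. a \<in> Q1 \<and> g \<in> B \<and> psrc g = src a \<and> ptgt tgt g = tgt a}"

definition psi0 :: "'a set \<Rightarrow> ('a \<Rightarrow> 'v) \<Rightarrow> ('a \<Rightarrow> 'v) \<Rightarrow> ('v,'a) path set
                   \<Rightarrow> (('v,'a) path \<times> ('v,'a) path) \<Rightarrow> ('v,'a,'k::field) pvec" where
  "psi0 Q1 src tgt B eg = (\<lambda>q.
      (\<Sum>a \<in> {a \<in> Q1. src a = fst (fst eg) \<and> pcat (arr src a) (snd eg) \<in> B}.
          pt (arr src a, pcat (arr src a) (snd eg)) q)
    - (\<Sum>a \<in> {a \<in> Q1. tgt a = fst (fst eg) \<and> pcat (snd eg) (arr src a) \<in> B}.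
          pt (arr src a, pcat (snd eg) (arr src a)) q))"

definition Im_psi0 :: "'v set \<Rightarrow> 'a set \<Rightarrow> ('a \<Rightarrow> 'v) \<Rightarrow> ('a \<Rightarrow> 'v) \<Rightarrow> ('v,'a) path set
                       \<Rightarrow> ('v,'a,'k::field) pvec set" where
  "Im_psi0 Q0 Q1 src tgt B =
     {(\<lambda>q. \<Sum>p \<in> Q0B Q0 tgt B. c p * psi0 Q1 src tgt B p q) | c. True}"

definition repl :: "('v,'a) path \<Rightarrow> nat \<Rightarrow> ('v,'a) path \<Rightarrow> ('v,'a) path" where
  "repl eps i g = (fst eps, take i (snd eps) @ snd g @ drop (Suc i) (snd eps))"

text \<open>(eta, eps^(a,g)) = sum over all occurrences of a in eps whose replacement lies in B.\<close>
definition subst_pair :: "('v,'a) path set \<Rightarrow> ('v,'a) path \<Rightarrow> ('v,'a) path \<Rightarrow> 'a \<Rightarrow> ('v,'a) path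
                          \<Rightarrow> ('v,'a,'k::field) pvec" where
  "subst_pair B eta eps a g = (\<lambda>q.
     \<Sum>i \<in> {i. i < length (snd eps) \<and> snd eps ! i = a \<and> repl eps i g \<in> B}. pt (eta, repl eps i g) q)"

text \<open>Bracket on basis elements: [(a,g),(b,eps)] = (b, eps^(a,g)) - (a, g^(b,eps)).\<close>
definition brb :: "('v,'a) path set \<Rightarrow> (('v,'a) path \<times> ('v,'a) path) \<Rightarrow> (('v,'a) path \<times> ('v,'a) path)
                   \<Rightarrow> ('v,'a,'k::field) pvec" where
  "brb B p q = (\<lambda>r. subst_pair B (fst q) (snd q) (hd (snd (fst p))) (snd p) r
                  - subst_pair B (fst p) (snd p) (hd (snd (fst q))) (snd q) r)"

definition bracket1 :: "'a set \<Rightarrow> ('a \<Rightarrow> 'v) \<Rightarrow> ('a \<Rightarrow> 'v) \<Rightarrow> ('v,'a) path set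
     \<Rightarrow> ('v,'a,'k::field) pvec \<Rightarrow> ('v,'a,'k) pvec \<Rightarrow> ('v,'a,'k) pvec" where
  "bracket1 Q1 src tgt B u v = (\<lambda>r.
     \<Sum>p \<in> Q1B Q1 src tgt B. \<Sum>q \<in> Q1B Q1 src tgt B. u p * v q * brb B p q r)"

definition lie_iso :: "('x \<Rightarrow> 'k::field) set \<Rightarrow> (('x \<Rightarrow> 'k) \<Rightarrow> ('x \<Rightarrow> 'k) \<Rightarrow> ('x \<Rightarrow> 'k))
   \<Rightarrow> ('y \<Rightarrow> ('z \<Rightarrow> 'k)) set \<Rightarrow> (('y \<Rightarrow> ('z \<Rightarrow> 'k)) \<Rightarrow> ('y \<Rightarrow> ('z \<Rightarrow> 'k)) \<Rightarrow> ('y \<Rightarrow> ('z \<Rightarrow> 'k)))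
   \<Rightarrow> (('x \<Rightarrow> 'k) \<Rightarrow> ('y \<Rightarrow> ('z \<Rightarrow> 'k))) \<Rightarrow> bool" where
  "lie_iso L1 br1 L2 br2 f \<longleftrightarrow>
     bij_betw f L1 L2 \<and>
     (\<forall>u \<in> L1. \<forall>v \<in> L1. f (\<lambda>r. u r + v r) = (\<lambda>y d. f u y d + f v y d)) \<and>
     (\<forall>c. \<forall>u \<in> L1. f (\<lambda>r. c * u r) = (\<lambda>y d. c * f u y d)) \<and>
     (\<forall>u \<in> L1. \<forall>v \<in> L1. f (br1 u v) = br2 (f u) (f v))"

end

theory Submission
  imports Defs
begin

text \<open>The centraliser \<open>\<Lambda>\<^sup>E\<close> of \<open>E\<close>, spanned by the closed paths, is a copy of
  \<open>k(Q0//B)\<close> and maps onto both Lie algebras.  Under \<open>\<psi>\<^sub>0\<close>, the value of \<open>\<psi>\<^sub>0(x)\<close> at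
  \<open>(a, \<gamma>)\<close> is the \<open>\<gamma>\<close>-coefficient of \<open>[a, x]\<close>: \<open>\<psi>\<^sub>0(x)\<close> is the inner derivation
  \<open>-ad x\<close> restricted to the arrows.  Hence \<open>\<psi>\<^sub>0(x) = \<psi>\<^sub>0(y)\<close> iff \<open>x - y\<close> commutes
  with every arrow, iff \<open>x - y\<close> is central, iff \<open>ad x = ad y\<close>; and the inner derivations
  that are \<open>E\<close>-bimodule maps are exactly the \<open>ad x\<close> with \<open>x \<in> \<Lambda>\<^sup>E\<close>.  Finally
  \<open>(b, \<epsilon>\<^bsup>(a,\<gamma>)\<^esup>)\<close> is the Leibniz extension to paths of a derivation given on
  arrows; telescoping along the arrows of \<open>\<epsilon>\<close> shows that the extension of \<open>\<psi>\<^sub>0(x)\<close> sends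
  \<open>\<epsilon>\<close> to \<open>[\<epsilon>, x]\<close>, and the Jacobi identity turns the bracket of \<open>\<psi>\<^sub>0(x)\<close> and
  \<open>\<psi>\<^sub>0(y)\<close> into \<open>\<psi>\<^sub>0([y, x])\<close>.  So \<open>\<psi>\<^sub>0(x) \<mapsto> -ad x\<close> is the isomorphism.\<close>

lemma sum_pt_mult: "finite A \<Longrightarrow> (\<Sum>q\<in>A. pt p q * f q) = (if p \<in> A then f p else 0)"
  by (simp add: pt_def if_distrib[where f = "\<lambda>z. z * _"] sum.delta cong: if_cong)

lemma sum_indicator_eq:
  assumes "finite A"
  shows "(\<Sum>a\<in>A. if a = b \<and> P a then 1 else 0) = (if b \<in> A \<and> P b then 1 else (0::'k::field))"
proof -
  have "(\<Sum>a\<in>A. if a = b \<and> P a then 1 else 0) = (\<Sum>a\<in>A. if b = a then (if P b then 1 else 0) else (0::'k))"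
    by (rule sum.cong) auto
  then show ?thesis using assms by simp
qed

lemma sum_pt_support:
  fixes x :: "'p \<Rightarrow> 'k::field"
  assumes "finite A" and "\<And>d. x d \<noteq> 0 \<Longrightarrow> d \<in> A"
  shows "(\<lambda>d. \<Sum>g\<in>A. x g * pt g d) = x"
proof
  fix d
  have "(\<Sum>g\<in>A. x g * pt g d) = (\<Sum>g\<in>A. if d = g then x d else 0)"
    by (rule sum.cong) (auto simp: pt_def)
  then show "(\<Sum>g\<in>A. x g * pt g d) = x d" using assms by auto
qed

lemma psrc_pcat [simp]: "psrc (pcat be al) = psrc al"
  by (simp add: psrc_def pcat_def)

lemma ptgt_pcat: "ptgt tgt al = psrc be \<Longrightarrow> ptgt tgt (pcat be al) = ptgt tgt be"
  by (auto simp: ptgt_def psrc_def pcat_def)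

lemma pcat_assoc: "pcat (pcat c b) a = pcat c (pcat b a)"
  by (simp add: pcat_def)

lemma psrc_arr [simp]: "psrc (arr src b) = src b"
  by (simp add: psrc_def arr_def)

lemma ptgt_arr [simp]: "ptgt tgt (arr src b) = tgt b"
  by (simp add: ptgt_def arr_def)

lemma arr_eq_iff [simp]: "arr src a = arr src b \<longleftrightarrow> a = b"
  by (auto simp: arr_def)

lemma lie_iso_of_same_fibres:
  fixes g :: "('w \<Rightarrow> 'k::field) \<Rightarrow> ('x \<Rightarrow> 'k)" and h :: "('w \<Rightarrow> 'k) \<Rightarrow> ('y \<Rightarrow> 'z \<Rightarrow> 'k)"
  assumes g_onto: "g ` L = L1" and h_onto: "h ` L = L2"
    and same_fibres: "\<And>x y. x \<in> L \<Longrightarrow> y \<in> L \<Longrightarrow> g x = g y \<longleftrightarrow> h x = h y"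
    and add_closed: "\<And>x y. x \<in> L \<Longrightarrow> y \<in> L \<Longrightarrow> (\<lambda>d. x d + y d) \<in> L"
    and scale_closed: "\<And>c x. x \<in> L \<Longrightarrow> (\<lambda>d. c * x d) \<in> L"
    and br_closed: "\<And>x y. x \<in> L \<Longrightarrow> y \<in> L \<Longrightarrow> br x y \<in> L"
    and g_add: "\<And>x y. x \<in> L \<Longrightarrow> y \<in> L \<Longrightarrow> g (\<lambda>d. x d + y d) = (\<lambda>r. g x r + g y r)"
    and h_add: "\<And>x y. x \<in> L \<Longrightarrow> y \<in> L \<Longrightarrow> h (\<lambda>d. x d + y d) = (\<lambda>u d. h x u d + h y u d)"
    and g_scale: "\<And>c x. x \<in> L \<Longrightarrow> g (\<lambda>d. c * x d) = (\<lambda>r. c * g x r)"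
    and h_scale: "\<And>c x. x \<in> L \<Longrightarrow> h (\<lambda>d. c * x d) = (\<lambda>u d. c * h x u d)"
    and g_br: "\<And>x y. x \<in> L \<Longrightarrow> y \<in> L \<Longrightarrow> g (br x y) = br1 (g x) (g y)"
    and h_br: "\<And>x y. x \<in> L \<Longrightarrow> y \<in> L \<Longrightarrow> h (br x y) = br2 (h x) (h y)"
  shows "\<exists>f. lie_iso L1 br1 L2 br2 f"
proof
  define f where "f u = h (inv_into L g u)" for u
  have f_g: "f (g x) = h x" if "x \<in> L" for x
  proof -
    have "inv_into L g (g x) \<in> L" "g (inv_into L g (g x)) = g x"
      using that by (auto intro: inv_into_into f_inv_into_f[where f = g])
    then show ?thesis using same_fibres that unfolding f_def by blast
  qed
  have L1_cases: "\<exists>x\<in>L. u = g x" if "u \<in> L1" for u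
    using that g_onto by blast
  show "lie_iso L1 br1 L2 br2 f"
    unfolding lie_iso_def
  proof (intro conjI ballI allI)
    show "bij_betw f L1 L2"
    proof (rule bij_betw_imageI)
      show "inj_on f L1"
        by (rule inj_onI) (metis L1_cases f_g same_fibres)
      show "f ` L1 = L2"
        using g_onto h_onto f_g by (force simp: image_iff)
    qed
  next
    fix u v assume "u \<in> L1" "v \<in> L1"
    then obtain x y where "x \<in> L" "y \<in> L" "u = g x" "v = g y" by (metis L1_cases)
    then show "f (\<lambda>r. u r + v r) = (\<lambda>y d. f u y d + f v y d)"
      and "f (br1 u v) = br2 (f u) (f v)"
      by (simp_all add: g_add[symmetric] g_br[symmetric] f_g add_closed br_closed h_add h_br)
  next
    fix c u assume "u \<in> L1"
    then obtain x where "x \<in> L" "u = g x" by (metis L1_cases)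
    then show "f (\<lambda>r. c * u r) = (\<lambda>y d. c * f u y d)"
      by (simp add: g_scale[symmetric] f_g scale_closed h_scale)
  qed
qed

locale monomial_algebra =
  fixes Q0 :: "'v set" and Q1 :: "'a set" and src tgt :: "'a \<Rightarrow> 'v"
    and Z :: "('v,'a) path set"
  assumes arrows_in_Q0: "\<forall>a \<in> Q1. src a \<in> Q0 \<and> tgt a \<in> Q0"
    and relations_long: "\<forall>p \<in> Z. length (snd p) \<ge> 2"
    and finite_B: "finite (Bset Q0 Q1 src tgt Z)"
    and finite_Q1: "finite Q1"
    and finite_Q0: "finite Q0"
begin

abbreviation "B \<equiv> Bset Q0 Q1 src tgt Z"
abbreviation "valid \<equiv> valid_path Q0 Q1 src tgt"

lemma B_imp_valid: "d \<in> B \<Longrightarrow> valid d"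
  unfolding Bset_def by auto

lemma psrc_in_Q0: "d \<in> B \<Longrightarrow> psrc d \<in> Q0"
  unfolding Bset_def valid_path_def psrc_def by auto

lemma ptgt_in_Q0: "valid p \<Longrightarrow> ptgt tgt p \<in> Q0"
  using arrows_in_Q0 unfolding valid_path_def ptgt_def
  by (cases "snd p = []") (auto dest!: last_in_set)

lemma arrow_in_Q1: "e \<in> B \<Longrightarrow> i < length (snd e) \<Longrightarrow> snd e ! i \<in> Q1"
  using B_imp_valid unfolding valid_path_def by (meson nth_mem subsetD)

lemma vertex_in_B: "e \<in> Q0 \<Longrightarrow> (e, []) \<in> B"
  using relations_long unfolding Bset_def valid_path_def by (force simp: sublist_Nil_right)

lemma arr_in_B: "b \<in> Q1 \<Longrightarrow> arr src b \<in> B"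
proof -
  assume b: "b \<in> Q1"
  have "valid (arr src b)" using b arrows_in_Q0 unfolding valid_path_def arr_def by auto
  moreover have "\<not> sublist (snd p) [b]" if "p \<in> Z" for p
  proof
    assume "sublist (snd p) [b]"
    then have "length (snd p) \<le> 1" using sublist_length_le by fastforce
    then show False using relations_long that by fastforce
  qed
  ultimately show ?thesis unfolding Bset_def arr_def by auto
qed

lemma valid_pcatD:
  assumes v: "valid (pcat be al)" and c: "ptgt tgt al = psrc be"
  shows "valid al \<and> valid be"
proof -
  obtain v as where al: "al = (v, as)" by (cases al)
  obtain w bs where be: "be = (w, bs)" by (cases be)
  have V: "v \<in> Q0" "set as \<subseteq> Q1" "set bs \<subseteq> Q1"
     "as @ bs \<noteq> [] \<Longrightarrow> src (hd (as @ bs)) = v"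
     "\<And>i. Suc i < length (as @ bs) \<Longrightarrow> tgt ((as @ bs) ! i) = src ((as @ bs) ! Suc i)"
    using v unfolding valid_path_def pcat_def al be by auto
  have w: "w = ptgt tgt (v, as)" using c al be by (simp add: psrc_def)
  have "tgt (as ! i) = src (as ! Suc i)" if "Suc i < length as" for i
    using V(5)[of i] that by (simp add: nth_append)
  then have va: "valid al"
    unfolding al valid_path_def using V(1,2,4) by auto
  have "src (hd bs) = w" if "bs \<noteq> []"
  proof (cases "as = []")
    case True then show ?thesis using that V(4) w by (simp add: ptgt_def)
  next
    case False
    have "tgt ((as @ bs) ! (length as - 1)) = src ((as @ bs) ! Suc (length as - 1))"
      using V(5)[of "length as - 1"] that False by simp
    then show ?thesis using False that w
      by (simp add: ptgt_def nth_append last_conv_nth hd_conv_nth)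
  qed
  moreover have "tgt (bs ! i) = src (bs ! Suc i)" if "Suc i < length bs" for i
    using V(5)[of "length as + i"] that by (simp add: nth_append)
  ultimately have vb: "valid be"
    unfolding be valid_path_def using ptgt_in_Q0[OF va] w al V(3) by auto
  show ?thesis using va vb by simp
qed

lemma B_pcatD:
  assumes "pcat be al \<in> B" "ptgt tgt al = psrc be"
  shows "al \<in> B \<and> be \<in> B"
proof -
  have v: "valid al" "valid be" using valid_pcatD[of be al] assms unfolding Bset_def by auto
  have n: "\<not> (\<exists>p\<in>Z. sublist (snd p) (snd al @ snd be))"
    using assms(1) unfolding Bset_def pcat_def by auto
  have "\<not> (\<exists>p\<in>Z. sublist (snd p) (snd al))"
    using n sublist_order.order.trans[OF _ sublist_append_rightI] by blast
  moreover have "\<not> (\<exists>p\<in>Z. sublist (snd p) (snd be))"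
    using n sublist_order.order.trans[OF _ sublist_append_leftI] by blast
  ultimately show ?thesis using v unfolding Bset_def by auto
qed

lemma valid_snoc_ptgt:
  assumes "valid (v, as @ [b])"
  shows "ptgt tgt (v, as) = src b"
proof (cases "as = []")
  case True then show ?thesis using assms by (simp add: valid_path_def ptgt_def)
next
  case False
  have "tgt ((as @ [b]) ! (length as - 1)) = src ((as @ [b]) ! Suc (length as - 1))"
    using assms False unfolding valid_path_def by simp
  then show ?thesis using False by (simp add: ptgt_def nth_append last_conv_nth)
qed

section \<open>The monomial algebra \<open>\<Lambda>\<close>\<close>

abbreviation mult :: "(('v,'a) path \<Rightarrow> 'k::field) \<Rightarrow> (('v,'a) path \<Rightarrow> 'k) \<Rightarrow> (('v,'a) path \<Rightarrow> 'k)"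
    (infixl "\<cdot>" 70)
  where "x \<cdot> y \<equiv> lam_mult B tgt x y"

definition struct_const :: "('v,'a) path \<Rightarrow> ('v,'a) path \<Rightarrow> ('v,'a) path \<Rightarrow> 'k::field" where
  "struct_const be al d = (if d \<in> B \<and> ptgt tgt al = psrc be \<and> pcat be al = d then 1 else 0)"

lemma mult_expand: "(x \<cdot> y) d = (\<Sum>be\<in>B. \<Sum>al\<in>B. x be * y al * struct_const be al d)"
proof (cases "d \<in> B")
  case False then show ?thesis by (simp add: lam_mult_def struct_const_def)
next
  case True
  let ?P = "\<lambda>p. ptgt tgt (snd p) = psrc (fst p) \<and> pcat (fst p) (snd p) = d"
  have S: "{(be, al). be \<in> B \<and> al \<in> B \<and> ptgt tgt al = psrc be \<and> pcat be al = d}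
           = {p \<in> B \<times> B. ?P p}" by auto
  have "(x \<cdot> y) d = (\<Sum>p\<in>{p \<in> B \<times> B. ?P p}. (\<lambda>(be, al). x be * y al) p)"
    using True by (simp add: lam_mult_def S)
  also have "\<dots> = (\<Sum>p\<in>B \<times> B. if ?P p then (\<lambda>(be, al). x be * y al) p else 0)"
    by (rule sum.inter_filter) (simp add: finite_B)
  also have "\<dots> = (\<Sum>(be,al)\<in>B \<times> B. x be * y al * struct_const be al d)"
    using True by (intro sum.cong) (auto simp: struct_const_def)
  finally show ?thesis by (simp add: sum.cartesian_product)
qed

lemma struct_const_outside: "be \<notin> B \<or> al \<notin> B \<Longrightarrow> struct_const be al d = 0"
  using B_pcatD[of be al] by (auto simp: struct_const_def)

lemma mult_pt_left: "(pt be \<cdot> y) d = (\<Sum>al\<in>B. y al * struct_const be al d)"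
proof -
  have "(pt be \<cdot> y) d = (\<Sum>be'\<in>B. pt be be' * (\<Sum>al\<in>B. y al * struct_const be' al d))"
    unfolding mult_expand by (simp add: sum_distrib_left mult.assoc)
  then show ?thesis
    by (simp add: sum_pt_mult[OF finite_B] struct_const_outside)
qed

lemma mult_pt_right: "(x \<cdot> pt al) d = (\<Sum>be\<in>B. x be * struct_const be al d)"
proof -
  have "(x \<cdot> pt al) d = (\<Sum>be\<in>B. x be * (\<Sum>al'\<in>B. pt al al' * struct_const be al' d))"
    unfolding mult_expand by (simp add: sum_distrib_left mult.assoc mult.left_commute)
  then show ?thesis
    by (cases "al \<in> B") (simp_all add: sum_pt_mult[OF finite_B] struct_const_outside)
qed

lemma mult_pt_pt:
  "pt be \<cdot> pt al = (if ptgt tgt al = psrc be \<and> pcat be al \<in> B then pt (pcat be al) else (\<lambda>_. 0))"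
proof (rule ext)
  fix d
  have "(pt be \<cdot> pt al) d = struct_const be al d"
    by (cases "be \<in> B") (simp_all add: mult_pt_right sum_pt_mult[OF finite_B] struct_const_outside)
  then show "(pt be \<cdot> pt al) d = (if ptgt tgt al = psrc be \<and> pcat be al \<in> B then pt (pcat be al) else (\<lambda>_. 0)) d"
    by (auto simp: struct_const_def pt_def)
qed

lemma mult_cong:
  assumes "\<And>d. d \<in> B \<Longrightarrow> x d = x' d" "\<And>d. d \<in> B \<Longrightarrow> y d = y' d"
  shows "x \<cdot> y = x' \<cdot> y'"
  by (rule ext) (simp add: mult_expand assms)

lemma mult_expand_left: "(x \<cdot> y) d = (\<Sum>be\<in>B. x be * (pt be \<cdot> y) d)"
  by (simp only: mult_pt_left) (simp add: mult_expand sum_distrib_left mult.assoc)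

lemma mult_expand_right: "(x \<cdot> y) d = (\<Sum>al\<in>B. y al * (x \<cdot> pt al) d)"
proof -
  have "(\<Sum>al\<in>B. y al * (x \<cdot> pt al) d) = (\<Sum>al\<in>B. \<Sum>be\<in>B. x be * y al * struct_const be al d)"
    by (simp only: mult_pt_right sum_distrib_left) (simp add: mult.assoc mult.left_commute)
  also have "\<dots> = (\<Sum>be\<in>B. \<Sum>al\<in>B. x be * y al * struct_const be al d)"
    by (rule sum.swap)
  finally show ?thesis by (simp add: mult_expand)
qed

lemma mult_sum_left:
  assumes "finite I"
  shows "((\<lambda>q. \<Sum>i\<in>I. c i * f i q) \<cdot> y) d = (\<Sum>i\<in>I. c i * (f i \<cdot> y) d)"
proof -
  have "((\<lambda>q. \<Sum>i\<in>I. c i * f i q) \<cdot> y) d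
      = (\<Sum>be\<in>B. \<Sum>al\<in>B. \<Sum>i\<in>I. c i * (f i be * y al * struct_const be al d))"
    unfolding mult_expand by (simp add: sum_distrib_right sum_distrib_left mult.assoc)
  also have "\<dots> = (\<Sum>i\<in>I. c i * (\<Sum>be\<in>B. \<Sum>al\<in>B. f i be * y al * struct_const be al d))"
    by (simp only: sum_distrib_left sum.swap[where A = I])
  finally show ?thesis unfolding mult_expand .
qed

lemma mult_sum_right:
  assumes "finite I"
  shows "(x \<cdot> (\<lambda>q. \<Sum>i\<in>I. c i * f i q)) d = (\<Sum>i\<in>I. c i * (x \<cdot> f i) d)"
proof -
  have "(x \<cdot> (\<lambda>q. \<Sum>i\<in>I. c i * f i q)) d
      = (\<Sum>be\<in>B. \<Sum>al\<in>B. \<Sum>i\<in>I. c i * (x be * f i al * struct_const be al d))"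
    unfolding mult_expand
    by (simp add: sum_distrib_right sum_distrib_left mult.assoc mult.left_commute)
  also have "\<dots> = (\<Sum>i\<in>I. c i * (\<Sum>be\<in>B. \<Sum>al\<in>B. x be * f i al * struct_const be al d))"
    by (simp only: sum_distrib_left sum.swap[where A = I])
  finally show ?thesis unfolding mult_expand .
qed

lemma mult_sum_middle:
  assumes "finite I"
  shows "((S \<cdot> (\<lambda>q. \<Sum>i\<in>I. c i * f i q)) \<cdot> P) d = (\<Sum>i\<in>I. c i * ((S \<cdot> f i) \<cdot> P) d)"
proof -
  have "S \<cdot> (\<lambda>q. \<Sum>i\<in>I. c i * f i q) = (\<lambda>q. \<Sum>i\<in>I. c i * (S \<cdot> f i) q)"
    by (rule ext) (rule mult_sum_right[OF assms])
  then show ?thesis by (simp add: mult_sum_left[OF assms])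
qed

lemma mult_add_left: "(\<lambda>q. x q + x' q) \<cdot> y = (\<lambda>d. (x \<cdot> y) d + (x' \<cdot> y) d)"
  by (rule ext) (simp add: mult_expand sum.distrib algebra_simps)
lemma mult_add_right: "x \<cdot> (\<lambda>q. y q + y' q) = (\<lambda>d. (x \<cdot> y) d + (x \<cdot> y') d)"
  by (rule ext) (simp add: mult_expand sum.distrib algebra_simps)
lemma mult_diff_left: "(\<lambda>q. x q - x' q) \<cdot> y = (\<lambda>d. (x \<cdot> y) d - (x' \<cdot> y) d)"
  by (rule ext) (simp add: mult_expand sum_subtractf algebra_simps)
lemma mult_diff_right: "x \<cdot> (\<lambda>q. y q - y' q) = (\<lambda>d. (x \<cdot> y) d - (x \<cdot> y') d)"
  by (rule ext) (simp add: mult_expand sum_subtractf algebra_simps)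
lemma mult_scale_left: "(\<lambda>q. c * x q) \<cdot> y = (\<lambda>d. c * (x \<cdot> y) d)"
  by (rule ext) (simp add: mult_expand sum_distrib_left algebra_simps)
lemma mult_scale_right: "x \<cdot> (\<lambda>q. c * y q) = (\<lambda>d. c * (x \<cdot> y) d)"
  by (rule ext) (simp add: mult_expand sum_distrib_left algebra_simps)
lemma mult_neg_left: "(\<lambda>q. - x q) \<cdot> y = (\<lambda>d. - (x \<cdot> y) d)"
  by (rule ext) (simp add: mult_expand sum_negf algebra_simps)
lemma mult_neg_right: "x \<cdot> (\<lambda>q. - y q) = (\<lambda>d. - (x \<cdot> y) d)"
  by (rule ext) (simp add: mult_expand sum_negf algebra_simps)
lemma mult_zero_left: "(\<lambda>q. 0) \<cdot> y = (\<lambda>d. 0)"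
  by (rule ext) (simp add: mult_expand)
lemma mult_zero_right: "x \<cdot> (\<lambda>q. 0) = (\<lambda>d. 0)"
  by (rule ext) (simp add: mult_expand)

lemmas mult_bilinear = mult_add_left mult_add_right mult_diff_left mult_diff_right
  mult_scale_left mult_scale_right mult_neg_left mult_neg_right mult_zero_left mult_zero_right

lemma mult_pt_assoc: "(pt a \<cdot> pt b) \<cdot> pt c = (pt a \<cdot> (pt b \<cdot> pt c) :: ('v,'a) path \<Rightarrow> 'k::field)"
proof -
  let ?P = "ptgt tgt b = psrc a \<and> ptgt tgt c = psrc b \<and> pcat a (pcat b c) \<in> B"
  let ?R = "if ?P then pt (pcat a (pcat b c)) else (\<lambda>_. 0 :: 'k)"
  have "(pt a \<cdot> pt b) \<cdot> pt c = ?R"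
    using B_pcatD[of "pcat a b" c]
    by (cases "ptgt tgt b = psrc a \<and> pcat a b \<in> B") (auto simp: mult_pt_pt pcat_assoc mult_zero_left)
  moreover have "pt a \<cdot> (pt b \<cdot> pt c) = ?R"
    using B_pcatD[of a "pcat b c"]
    by (cases "ptgt tgt c = psrc b \<and> pcat b c \<in> B") (auto simp: mult_pt_pt ptgt_pcat mult_zero_right)
  ultimately show ?thesis by simp
qed

lemma mult_lassoc_expand_left: "((x \<cdot> y) \<cdot> z) d = (\<Sum>a\<in>B. x a * ((pt a \<cdot> y) \<cdot> z) d)"
proof -
  have "x \<cdot> y = (\<lambda>q. \<Sum>a\<in>B. x a * (pt a \<cdot> y) q)" by (rule ext) (rule mult_expand_left)
  then show ?thesis by (simp add: mult_sum_left[OF finite_B])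
qed

lemma mult_lassoc_expand_middle: "((x \<cdot> y) \<cdot> z) d = (\<Sum>b\<in>B. y b * ((x \<cdot> pt b) \<cdot> z) d)"
proof -
  have "x \<cdot> y = (\<lambda>q. \<Sum>b\<in>B. y b * (x \<cdot> pt b) q)" by (rule ext) (rule mult_expand_right)
  then show ?thesis by (simp add: mult_sum_left[OF finite_B])
qed

lemma mult_rassoc_expand_middle: "(x \<cdot> (y \<cdot> z)) d = (\<Sum>b\<in>B. y b * (x \<cdot> (pt b \<cdot> z)) d)"
proof -
  have "y \<cdot> z = (\<lambda>q. \<Sum>b\<in>B. y b * (pt b \<cdot> z) q)" by (rule ext) (rule mult_expand_left)
  then show ?thesis by (simp add: mult_sum_right[OF finite_B])
qed

lemma mult_rassoc_expand_right: "(x \<cdot> (y \<cdot> z)) d = (\<Sum>c\<in>B. z c * (x \<cdot> (y \<cdot> pt c)) d)"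
proof -
  have "y \<cdot> z = (\<lambda>q. \<Sum>c\<in>B. z c * (y \<cdot> pt c) q)" by (rule ext) (rule mult_expand_right)
  then show ?thesis by (simp add: mult_sum_right[OF finite_B])
qed

lemma mult_assoc: "(x \<cdot> y) \<cdot> z = x \<cdot> (y \<cdot> z)"
proof (rule ext)
  fix d
  have "((x \<cdot> y) \<cdot> z) d = (\<Sum>a\<in>B. x a * (\<Sum>b\<in>B. y b * (\<Sum>c\<in>B. z c * ((pt a \<cdot> pt b) \<cdot> pt c) d)))"
    by (simp only: mult_lassoc_expand_left[of x y z] mult_lassoc_expand_middle[of "pt _" y z]
        mult_expand_right[of "pt _ \<cdot> pt _" z])
  moreover have "(x \<cdot> (y \<cdot> z)) d = (\<Sum>a\<in>B. x a * (\<Sum>b\<in>B. y b * (\<Sum>c\<in>B. z c * (pt a \<cdot> (pt b \<cdot> pt c)) d)))"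
    by (simp only: mult_expand_left[of x "y \<cdot> z"] mult_rassoc_expand_middle[of "pt _" y z]
        mult_rassoc_expand_right[of "pt _" "pt _" z])
  ultimately show "((x \<cdot> y) \<cdot> z) d = (x \<cdot> (y \<cdot> z)) d" by (simp add: mult_pt_assoc)
qed

lemma mult_vertex_left: "(pt (e, []) \<cdot> x) d = (if d \<in> B \<and> ptgt tgt d = e then x d else 0)"
proof -
  have sc: "struct_const (e, []) al d = (if al = d then (if d \<in> B \<and> ptgt tgt d = e then 1 else 0) else 0)"
    for al :: "('v,'a) path"
    by (auto simp: struct_const_def psrc_def pcat_def)
  show ?thesis
    by (simp add: mult_pt_left sc if_distrib[where f = "\<lambda>z. _ * z"] sum.delta finite_B cong: if_cong)
qed

lemma mult_vertex_right: "(x \<cdot> pt (e, [])) d = (if d \<in> B \<and> psrc d = e then x d else 0)"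
proof -
  have sc: "struct_const be (e, []) d = (if be = d then (if d \<in> B \<and> psrc d = e then 1 else 0) else 0)"
    for be :: "('v,'a) path"
    by (cases be; cases d) (auto simp: struct_const_def psrc_def pcat_def ptgt_def)
  show ?thesis
    by (simp add: mult_pt_right sc if_distrib[where f = "\<lambda>z. _ * z"] sum.delta finite_B cong: if_cong)
qed

lemma mult_in_lam_space: "x \<cdot> y \<in> lam_space B"
  by (simp add: lam_space_def lam_mult_def)

lemma lam_space_add: "x \<in> lam_space B \<Longrightarrow> y \<in> lam_space B \<Longrightarrow> (\<lambda>d. x d + y d) \<in> lam_space B"
  and lam_space_diff: "x \<in> lam_space B \<Longrightarrow> y \<in> lam_space B \<Longrightarrow> (\<lambda>d. x d - y d) \<in> lam_space B"
  and lam_space_scale: "x \<in> lam_space B \<Longrightarrow> (\<lambda>d. c * x d) \<in> lam_space B"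
  and lam_space_zero: "(\<lambda>d. 0) \<in> lam_space B"
  by (simp_all add: lam_space_def)

lemma mult_nonzeroE:
  fixes x y :: "('v,'a) path \<Rightarrow> 'k::field"
  assumes "(x \<cdot> y) d \<noteq> 0"
  obtains be al where "x be \<noteq> 0" "y al \<noteq> 0" "ptgt tgt al = psrc be" "pcat be al = d" "d \<in> B"
proof -
  from assms obtain be al where "x be * y al * struct_const be al d \<noteq> 0"
    unfolding mult_expand by (meson sum.not_neutral_contains_not_neutral)
  then have "x be \<noteq> 0" "y al \<noteq> 0" "d \<in> B \<and> ptgt tgt al = psrc be \<and> pcat be al = d"
    by (auto simp: struct_const_def split: if_splits)
  then show ?thesis using that by blast
qed

section \<open>The centraliser of \<open>E\<close>\<close>

text \<open>This is \<open>\<Lambda>\<^sup>E\<close>: an element of \<open>\<Lambda>\<close> commutes with \<open>E\<close> iff it is supported on closed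
  paths, i.e. on \<open>Q0//B\<close>.\<close>

definition Lam_E :: "(('v,'a) path \<Rightarrow> 'k::field) set" where
  "Lam_E = {x \<in> lam_space B. \<forall>d. x d \<noteq> 0 \<longrightarrow> psrc d = ptgt tgt d}"

lemma Lam_E_iff: "x \<in> Lam_E \<longleftrightarrow> (\<forall>d. d \<notin> B \<or> psrc d \<noteq> ptgt tgt d \<longrightarrow> x d = 0)"
  unfolding Lam_E_def lam_space_def by blast

lemma Lam_E_support_closed: "x \<in> Lam_E \<Longrightarrow> x d \<noteq> 0 \<Longrightarrow> psrc d = ptgt tgt d"
  unfolding Lam_E_def by blast

lemma Lam_E_lam_space: "x \<in> Lam_E \<Longrightarrow> x \<in> lam_space B"
  by (simp add: Lam_E_def)

lemma Lam_E_add: "x \<in> Lam_E \<Longrightarrow> y \<in> Lam_E \<Longrightarrow> (\<lambda>d. x d + y d) \<in> Lam_E"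
  and Lam_E_diff: "x \<in> Lam_E \<Longrightarrow> y \<in> Lam_E \<Longrightarrow> (\<lambda>d. x d - y d) \<in> Lam_E"
  and Lam_E_scale: "x \<in> Lam_E \<Longrightarrow> (\<lambda>d. c * x d) \<in> Lam_E"
  and Lam_E_neg: "x \<in> Lam_E \<Longrightarrow> (\<lambda>d. - x d) \<in> Lam_E"
  by (simp_all add: Lam_E_iff)

lemma Lam_E_mult: "x \<in> Lam_E \<Longrightarrow> y \<in> Lam_E \<Longrightarrow> x \<cdot> y \<in> Lam_E"
proof -
  assume x: "x \<in> Lam_E" and y: "y \<in> Lam_E"
  have "psrc d = ptgt tgt d" if ne: "(x \<cdot> y) d \<noteq> 0" for d
  proof -
    obtain be al where *: "x be \<noteq> 0" "y al \<noteq> 0" "ptgt tgt al = psrc be" "pcat be al = d"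
      using mult_nonzeroE[OF ne] by blast
    have "psrc be = ptgt tgt be" "psrc al = ptgt tgt al"
      using Lam_E_support_closed[OF x *(1)] Lam_E_support_closed[OF y *(2)] .
    then show ?thesis using * ptgt_pcat[of tgt al be] by auto
  qed
  then show ?thesis unfolding Lam_E_def using mult_in_lam_space by auto
qed

lemma Lam_E_vertex_commute: "x \<in> Lam_E \<Longrightarrow> pt (e, []) \<cdot> x = x \<cdot> pt (e, [])"
  by (auto simp: fun_eq_iff mult_vertex_left mult_vertex_right Lam_E_iff)

lemma E_space_expand:
  fixes u :: "('v,'a) path \<Rightarrow> 'k::field"
  assumes "u \<in> E_space B" "d \<in> B"
  shows "u d = (\<Sum>e\<in>Q0. u (e, []) * pt (e, []) d)"
proof (cases "snd d = []")
  case True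
  then obtain v where d: "d = (v, [])" by (cases d) simp
  have "v \<in> Q0" using assms(2) d unfolding Bset_def valid_path_def by auto
  then show ?thesis using d by (simp add: pt_def finite_Q0 if_distrib[where f = "\<lambda>z. _ * z"] cong: if_cong)
next
  case False
  then show ?thesis using assms(1) unfolding E_space_def by (cases d) (auto simp: pt_def)
qed

lemma Lam_E_E_commute:
  assumes w: "w \<in> Lam_E" and u: "u \<in> E_space B"
  shows "w \<cdot> u = u \<cdot> w"
proof -
  let ?U = "\<lambda>q. \<Sum>e\<in>Q0. u (e, []) * pt (e, []) q"
  have "w \<cdot> u = w \<cdot> ?U" by (rule mult_cong) (simp_all add: E_space_expand[OF u])
  also have "\<dots> = (\<lambda>d. \<Sum>e\<in>Q0. u (e, []) * (w \<cdot> pt (e, [])) d)"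
    by (rule ext) (rule mult_sum_right[OF finite_Q0])
  also have "\<dots> = (\<lambda>d. \<Sum>e\<in>Q0. u (e, []) * (pt (e, []) \<cdot> w) d)"
    using Lam_E_vertex_commute[OF w] by simp
  also have "\<dots> = ?U \<cdot> w"
    by (rule ext) (rule mult_sum_left[OF finite_Q0, symmetric])
  also have "\<dots> = u \<cdot> w" by (rule mult_cong) (simp_all add: E_space_expand[OF u])
  finally show ?thesis .
qed

text \<open>Every path is a product of arrows and a vertex, so commuting with the vertices and the
  arrows is enough to be central.\<close>

lemma Lam_E_central:
  assumes z: "z \<in> Lam_E"
    and arrows_commute: "\<And>b. b \<in> Q1 \<Longrightarrow> pt (arr src b) \<cdot> z = z \<cdot> pt (arr src b)"
  shows "z \<cdot> y = y \<cdot> z"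
proof -
  have "\<forall>v. (v, as) \<in> B \<longrightarrow> z \<cdot> pt (v, as) = pt (v, as) \<cdot> z" for as
  proof (induction as rule: rev_induct)
    case Nil
    show ?case using Lam_E_vertex_commute[OF z] by simp
  next
    case (snoc b as)
    show ?case
    proof (intro allI impI)
      fix v assume d: "(v, as @ [b]) \<in> B"
      have c: "ptgt tgt (v, as) = psrc (arr src b)"
        using valid_snoc_ptgt[OF B_imp_valid[OF d]] by simp
      have pc: "pcat (arr src b) (v, as) = (v, as @ [b])" by (simp add: pcat_def arr_def)
      have "(v, as) \<in> B" using B_pcatD[of "arr src b" "(v, as)"] d c pc by simp
      then have IH: "z \<cdot> pt (v, as) = pt (v, as) \<cdot> z" using snoc by blast
      have bQ: "b \<in> Q1" using B_imp_valid[OF d] unfolding valid_path_def by auto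
      have e: "pt (v, as @ [b]) = pt (arr src b) \<cdot> pt (v, as)"
        using c pc d by (simp add: mult_pt_pt)
      have "z \<cdot> pt (v, as @ [b]) = (z \<cdot> pt (arr src b)) \<cdot> pt (v, as)"
        by (simp add: e mult_assoc)
      also have "\<dots> = pt (arr src b) \<cdot> (z \<cdot> pt (v, as))"
        by (metis arrows_commute[OF bQ] mult_assoc)
      also have "\<dots> = pt (v, as @ [b]) \<cdot> z"
        by (simp add: IH e mult_assoc)
      finally show "z \<cdot> pt (v, as @ [b]) = pt (v, as @ [b]) \<cdot> z" .
    qed
  qed
  then have "z \<cdot> pt al = pt al \<cdot> z" if "al \<in> B" for al
    using that by (cases al) auto
  then show ?thesis
    by (intro ext) (simp add: mult_expand_right[of z y] mult_expand_left[of y z])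
qed

section \<open>Inner derivations\<close>

abbreviation commutator :: "(('v,'a) path \<Rightarrow> 'k::field) \<Rightarrow> (('v,'a) path \<Rightarrow> 'k) \<Rightarrow> (('v,'a) path \<Rightarrow> 'k)"
  where "commutator x y \<equiv> \<lambda>d. (x \<cdot> y) d - (y \<cdot> x) d"

abbreviation ad :: "(('v,'a) path \<Rightarrow> 'k::field) \<Rightarrow> (('v,'a) path \<Rightarrow> 'k) \<Rightarrow> (('v,'a) path \<Rightarrow> 'k)"
  where "ad x \<equiv> ad_map B tgt x"

lemma Lam_E_commutator: "x \<in> Lam_E \<Longrightarrow> y \<in> Lam_E \<Longrightarrow> commutator x y \<in> Lam_E"
  by (intro Lam_E_diff Lam_E_mult)

lemma commutator_sum_left:
  assumes "finite I"
  shows "commutator (\<lambda>q. \<Sum>i\<in>I. c i * f i q) x d = (\<Sum>i\<in>I. c i * commutator (f i) x d)"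
  by (simp add: mult_sum_left[OF assms] mult_sum_right[OF assms] sum_subtractf right_diff_distrib)

lemma ad_neg: "ad (\<lambda>d. - x d) = (\<lambda>z d. - ad x z d)"
  and ad_scale: "ad (\<lambda>d. c * x d) = (\<lambda>z d. c * ad x z d)"
  and ad_diff: "ad (\<lambda>d. x d - y d) = (\<lambda>z d. ad x z d - ad y z d)"
  by (simp_all add: ad_map_def mult_bilinear fun_eq_iff algebra_simps)

lemma comm_bracket_ad: "comm_bracket (ad x) (ad y) = ad (commutator x y)"
proof (intro ext)
  fix z d
  show "comm_bracket (ad x) (ad y) z d = ad (commutator x y) z d"
    by (cases "z \<in> lam_space B")
      (simp_all add: comm_bracket_def ad_map_def lam_space_diff lam_space_zero mult_in_lam_space mult_bilinear
        mult_assoc algebra_simps)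
qed

text \<open>\<open>ad w\<close> is \<open>E\<close>-bilinear because \<open>w \<in> \<Lambda>\<^sup>E\<close> commutes with \<open>E\<close>.\<close>

lemma ad_is_E_derivation:
  fixes w :: "('v,'a) path \<Rightarrow> 'k::field"
  assumes w: "w \<in> Lam_E"
  shows "is_E_derivation B tgt (ad w)"
  unfolding is_E_derivation_def
proof (intro conjI ballI allI)
  fix u w' x :: "('v,'a) path \<Rightarrow> 'k"
  assume u: "u \<in> E_space B" and w': "w' \<in> E_space B" and x: "x \<in> lam_space B"
  have "w \<cdot> (u \<cdot> (x \<cdot> w')) = u \<cdot> ((w \<cdot> x) \<cdot> w')"
    by (metis Lam_E_E_commute[OF w u] mult_assoc)
  moreover have "(u \<cdot> (x \<cdot> w')) \<cdot> w = u \<cdot> ((x \<cdot> w) \<cdot> w')"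
    by (metis Lam_E_E_commute[OF w w'] mult_assoc)
  ultimately show "ad w (u \<cdot> (x \<cdot> w')) = u \<cdot> (ad w x \<cdot> w')"
    using x by (simp add: ad_map_def mult_in_lam_space mult_bilinear fun_eq_iff)
qed (simp_all add: ad_map_def lam_space_add lam_space_diff lam_space_scale mult_in_lam_space
      mult_bilinear mult_assoc fun_eq_iff algebra_simps)

text \<open>Conversely, testing the \<open>E\<close>-bilinearity of \<open>ad x\<close> on a vertex idempotent \<open>e\<close> shows
  that \<open>x\<close> has no component on a path from \<open>e\<close> to another vertex.\<close>

lemma Lam_E_if_ad_E_derivation:
  fixes x :: "('v,'a) path \<Rightarrow> 'k::field"
  assumes x: "x \<in> lam_space B" and D: "is_E_derivation B tgt (ad x)"
  shows "x \<in> Lam_E"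
proof -
  have "psrc d = ptgt tgt d" if ne: "x d \<noteq> 0" for d
  proof -
    have dB: "d \<in> B" using x ne unfolding lam_space_def by blast
    define e where "e = psrc d"
    let ?E = "pt (e, []) :: ('v,'a) path \<Rightarrow> 'k"
    have El: "?E \<in> lam_space B" and EB: "?E \<in> E_space B"
      using vertex_in_B[OF psrc_in_Q0[OF dB]] by (auto simp: e_def E_space_def lam_space_def pt_def)
    have EE: "?E \<cdot> ?E = ?E"
      using vertex_in_B[OF psrc_in_Q0[OF dB]] by (simp add: e_def mult_pt_pt ptgt_def psrc_def pcat_def)
    have "ad x (?E \<cdot> (?E \<cdot> ?E)) = ?E \<cdot> (ad x ?E \<cdot> ?E)"
      using D EB El unfolding is_E_derivation_def by blast
    then have "ad x ?E d = (?E \<cdot> (ad x ?E \<cdot> ?E)) d" by (simp add: EE)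
    then show ?thesis
      using dB ne El by (auto simp: e_def ad_map_def mult_vertex_left mult_vertex_right split: if_splits)
  qed
  then show ?thesis using x unfolding Lam_E_def by blast
qed

lemma Ad_E_eq: "Ad_E B tgt = ad ` Lam_E"
  unfolding Ad_E_def
  using Lam_E_if_ad_E_derivation ad_is_E_derivation Lam_E_lam_space by blast

section \<open>The map \<open>\<psi>\<^sub>0\<close>\<close>

abbreviation "Q0_B \<equiv> Q0B Q0 tgt B"
abbreviation "Q1_B \<equiv> Q1B Q1 src tgt B"

text \<open>\<open>\<psi>\<^sub>0\<close> on \<open>k(Q0//B)\<close>, where \<open>x \<in> \<Lambda>\<^sup>E\<close> is read as the coefficient vector
  \<open>(e, \<gamma>) \<mapsto> x \<gamma>\<close> of its closed paths.\<close>

definition psi0_of :: "(('v,'a) path \<Rightarrow> 'k::field) \<Rightarrow> ('v,'a,'k) pvec" where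
  "psi0_of x = (\<lambda>r. \<Sum>p\<in>Q0_B. x (snd p) * psi0 Q1 src tgt B p r)"

lemma psi0_of_add: "psi0_of (\<lambda>d. x d + y d) = (\<lambda>r. psi0_of x r + psi0_of y r)"
  and psi0_of_diff: "psi0_of (\<lambda>d. x d - y d) = (\<lambda>r. psi0_of x r - psi0_of y r)"
  and psi0_of_scale: "psi0_of (\<lambda>d. c * x d) = (\<lambda>r. c * psi0_of x r)"
  by (simp_all add: psi0_of_def fun_eq_iff sum.distrib sum_subtractf sum_distrib_left
      distrib_right left_diff_distrib mult.assoc)

lemma Q0_B_eq_image: "Q0_B = (\<lambda>al. ((psrc al, []), al)) ` {al \<in> B. psrc al = ptgt tgt al}"
  unfolding Q0B_def using psrc_in_Q0 by fastforce

lemma Q0_B_D: "p \<in> Q0_B \<Longrightarrow> p = ((psrc (snd p), []), snd p) \<and> snd p \<in> B \<and> psrc (snd p) = ptgt tgt (snd p)"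
  unfolding Q0B_def by auto

lemma Q1_B_I: "b \<in> Q1 \<Longrightarrow> g \<in> B \<Longrightarrow> psrc g = src b \<Longrightarrow> ptgt tgt g = tgt b \<Longrightarrow> (arr src b, g) \<in> Q1_B"
  unfolding Q1B_def by blast

lemma finite_Q1_B: "finite Q1_B"
proof -
  have "Q1_B \<subseteq> (arr src ` Q1) \<times> B" unfolding Q1B_def by auto
  then show ?thesis using finite_B finite_Q1 finite_subset by blast
qed

lemma sum_B_eq_sum_Q0_B:
  assumes x: "x \<in> Lam_E"
  shows "(\<Sum>al\<in>B. x al * F al) = (\<Sum>p\<in>Q0_B. x (snd p) * F (snd p))"
proof -
  let ?C = "{al \<in> B. psrc al = ptgt tgt al}"
  have "(\<Sum>p\<in>Q0_B. x (snd p) * F (snd p)) = (\<Sum>al\<in>?C. x al * F al)"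
    unfolding Q0_B_eq_image by (subst sum.reindex) (auto simp: inj_on_def)
  also have "\<dots> = (\<Sum>al\<in>B. x al * F al)"
    by (rule sum.mono_neutral_left) (auto simp: finite_B dest: Lam_E_support_closed[OF x])
  finally show ?thesis by simp
qed

lemma psi0_apply_arrow:
  assumes b: "b \<in> Q1"
  shows "psi0 Q1 src tgt B p (arr src b, d) =
    (if src b = fst (fst p) \<and> pcat (arr src b) (snd p) \<in> B \<and> d = pcat (arr src b) (snd p) then 1 else 0)
  - (if tgt b = fst (fst p) \<and> pcat (snd p) (arr src b) \<in> B \<and> d = pcat (snd p) (arr src b) then 1 else (0::'k::field))"
proof -
  have "pt (arr src a, q) (arr src b, d) = (if a = b \<and> d = q then 1 else (0::'k))" for a q
    by (auto simp: pt_def)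
  then show ?thesis
    unfolding psi0_def using b by (simp add: sum_indicator_eq finite_Q1)
qed

lemma psi0_outside:
  assumes p: "p \<in> Q0_B" and r: "r \<notin> Q1_B"
  shows "psi0 Q1 src tgt B p r = (0::'k::field)"
proof -
  obtain e g where pe: "p = ((e, []), g)" "g \<in> B" "psrc g = e" "ptgt tgt g = e"
    using p unfolding Q0B_def by auto
  have "(pt (arr src a, pcat (arr src a) g) r :: 'k) = 0"
    if "a \<in> Q1" "src a = e" "pcat (arr src a) g \<in> B" for a
  proof -
    have "(arr src a, pcat (arr src a) g) \<in> Q1_B"
      by (rule Q1_B_I) (use that pe ptgt_pcat[of tgt g "arr src a"] in auto)
    then show ?thesis using r by (auto simp: pt_def)
  qed
  moreover have "(pt (arr src a, pcat g (arr src a)) r :: 'k) = 0"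
    if "a \<in> Q1" "tgt a = e" "pcat g (arr src a) \<in> B" for a
  proof -
    have "(arr src a, pcat g (arr src a)) \<in> Q1_B"
      by (rule Q1_B_I) (use that pe ptgt_pcat[of tgt "arr src a" g] in auto)
    then show ?thesis using r by (auto simp: pt_def)
  qed
  ultimately show ?thesis unfolding psi0_def using pe by simp
qed

lemma psi0_of_apply:
  fixes x :: "('v,'a) path \<Rightarrow> 'k::field"
  assumes x: "x \<in> Lam_E"
  shows "psi0_of x r = (if r \<in> Q1_B then commutator (pt (fst r)) x (snd r) else 0)"
proof (cases "r \<in> Q1_B")
  case False
  then show ?thesis unfolding psi0_of_def by (simp add: psi0_outside)
next
  case True
  then obtain b d where r: "r = (arr src b, d)" "b \<in> Q1" unfolding Q1B_def by auto
  let ?I1 = "\<lambda>g. if src b = ptgt tgt g \<and> pcat (arr src b) g \<in> B \<and> d = pcat (arr src b) g then 1 else (0::'k)"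
  let ?I2 = "\<lambda>g. if tgt b = psrc g \<and> pcat g (arr src b) \<in> B \<and> d = pcat g (arr src b) then 1 else (0::'k)"
  have "psi0_of x r = (\<Sum>p\<in>Q0_B. x (snd p) * ?I1 (snd p)) - (\<Sum>p\<in>Q0_B. x (snd p) * ?I2 (snd p))"
    unfolding psi0_of_def sum_subtractf[symmetric] r(1)
  proof (rule sum.cong[OF refl])
    fix p assume "p \<in> Q0_B"
    then have "fst (fst p) = psrc (snd p)" "fst (fst p) = ptgt tgt (snd p)"
      using Q0_B_D by (metis fst_conv)+
    then show "x (snd p) * psi0 Q1 src tgt B p (arr src b, d) = x (snd p) * ?I1 (snd p) - x (snd p) * ?I2 (snd p)"
      unfolding psi0_apply_arrow[OF r(2)] by (simp add: right_diff_distrib)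
  qed
  moreover have "(pt (arr src b) \<cdot> x) d = (\<Sum>p\<in>Q0_B. x (snd p) * ?I1 (snd p))"
    unfolding mult_pt_left sum_B_eq_sum_Q0_B[OF x] using r by (intro sum.cong) (auto simp: struct_const_def)
  moreover have "(x \<cdot> pt (arr src b)) d = (\<Sum>p\<in>Q0_B. x (snd p) * ?I2 (snd p))"
    unfolding mult_pt_right sum_B_eq_sum_Q0_B[OF x] using r by (intro sum.cong) (auto simp: struct_const_def)
  ultimately show ?thesis using True r by simp
qed

lemma Im_psi0_eq: "Im_psi0 Q0 Q1 src tgt B = (psi0_of ` Lam_E :: ('v,'a,'k::field) pvec set)"
proof
  show "Im_psi0 Q0 Q1 src tgt B \<subseteq> (psi0_of ` Lam_E :: ('v,'a,'k) pvec set)"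
  proof
    fix u :: "('v,'a,'k) pvec" assume "u \<in> Im_psi0 Q0 Q1 src tgt B"
    then obtain c where u: "u = (\<lambda>q. \<Sum>p\<in>Q0_B. c p * psi0 Q1 src tgt B p q)"
      unfolding Im_psi0_def by auto
    define x where "x al = (if al \<in> B \<and> psrc al = ptgt tgt al then c ((psrc al, []), al) else 0)" for al
    have "x \<in> Lam_E" unfolding Lam_E_iff x_def by auto
    moreover have "psi0_of x = u" unfolding u psi0_of_def
      by (intro ext sum.cong refl) (metis (no_types, lifting) Q0_B_D x_def)
    ultimately show "u \<in> psi0_of ` Lam_E" by blast
  qed
  show "(psi0_of ` Lam_E :: ('v,'a,'k) pvec set) \<subseteq> Im_psi0 Q0 Q1 src tgt B"
    unfolding Im_psi0_def psi0_of_def by (auto intro!: exI[of _ "\<lambda>p. _ (snd p)"])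
qed

lemma commutator_arrow_support:
  fixes x :: "('v,'a) path \<Rightarrow> 'k::field"
  assumes x: "x \<in> Lam_E" and b: "b \<in> Q1" and ne: "commutator (pt (arr src b)) x d \<noteq> 0"
  shows "(arr src b, d) \<in> Q1_B"
proof (cases "(pt (arr src b) \<cdot> x) d = 0")
  case False
  then obtain be al where *: "pt (arr src b) be \<noteq> (0::'k)" "x al \<noteq> 0" "ptgt tgt al = psrc be"
      "pcat be al = d" "d \<in> B"
    by (rule mult_nonzeroE)
  have "be = arr src b" using *(1) by (auto simp: pt_def split: if_splits)
  then show ?thesis
    using * Lam_E_support_closed[OF x *(2)] ptgt_pcat[OF *(3)] by (intro Q1_B_I[OF b]) auto
next
  case True
  then obtain be al where *: "x be \<noteq> 0" "pt (arr src b) al \<noteq> (0::'k)" "ptgt tgt al = psrc be"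
      "pcat be al = d" "d \<in> B"
    using ne by (auto elim: mult_nonzeroE)
  have "al = arr src b" using *(2) by (auto simp: pt_def split: if_splits)
  then show ?thesis
    using * Lam_E_support_closed[OF x *(1)] ptgt_pcat[OF *(3)] by (intro Q1_B_I[OF b]) auto
qed

lemma psi0_of_eq_0_iff:
  assumes z: "z \<in> Lam_E"
  shows "psi0_of z = (\<lambda>r. 0) \<longleftrightarrow> (\<forall>b\<in>Q1. pt (arr src b) \<cdot> z = z \<cdot> pt (arr src b))"
proof
  assume psi0: "psi0_of z = (\<lambda>r. 0)"
  show "\<forall>b\<in>Q1. pt (arr src b) \<cdot> z = z \<cdot> pt (arr src b)"
  proof (intro ballI ext)
    fix b d assume b: "b \<in> Q1"
    show "(pt (arr src b) \<cdot> z) d = (z \<cdot> pt (arr src b)) d"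
    proof (cases "(arr src b, d) \<in> Q1_B")
      case True
      then show ?thesis using fun_cong[OF psi0, of "(arr src b, d)"] by (simp add: psi0_of_apply[OF z])
    next
      case False
      then show ?thesis using commutator_arrow_support[OF z b, of d] by auto
    qed
  qed
next
  assume "\<forall>b\<in>Q1. pt (arr src b) \<cdot> z = z \<cdot> pt (arr src b)"
  then show "psi0_of z = (\<lambda>r. 0)"
    by (auto simp: fun_eq_iff psi0_of_apply[OF z] Q1B_def)
qed

lemma ad_eq_0_iff:
  fixes z :: "('v,'a) path \<Rightarrow> 'k::field"
  assumes z: "z \<in> Lam_E"
  shows "ad z = (\<lambda>y d. 0) \<longleftrightarrow> (\<forall>b\<in>Q1. pt (arr src b) \<cdot> z = z \<cdot> pt (arr src b))"
proof
  assume ad0: "ad z = (\<lambda>y d. 0)"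
  show "\<forall>b\<in>Q1. pt (arr src b) \<cdot> z = z \<cdot> pt (arr src b)"
  proof (intro ballI ext)
    fix b d assume "b \<in> Q1"
    then have "(pt (arr src b) :: ('v,'a) path \<Rightarrow> 'k) \<in> lam_space B"
      using arr_in_B by (auto simp: lam_space_def pt_def)
    then show "(pt (arr src b) \<cdot> z) d = (z \<cdot> pt (arr src b)) d"
      using fun_cong[OF fun_cong[OF ad0, of "pt (arr src b)"], of d] by (simp add: ad_map_def)
  qed
next
  assume "\<forall>b\<in>Q1. pt (arr src b) \<cdot> z = z \<cdot> pt (arr src b)"
  then have "z \<cdot> y = y \<cdot> z" for y
    using Lam_E_central[OF z] by blast
  then show "ad z = (\<lambda>y d. 0)"
    by (simp add: ad_map_def fun_eq_iff)
qed

lemma psi0_of_eq_iff_ad_eq: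
  assumes x: "x \<in> Lam_E" and y: "y \<in> Lam_E"
  shows "psi0_of x = psi0_of y \<longleftrightarrow> ad x = ad y"
proof -
  have "psi0_of x = psi0_of y \<longleftrightarrow> psi0_of (\<lambda>d. x d - y d) = (\<lambda>r. 0)"
    by (simp add: psi0_of_diff fun_eq_iff)
  also have "\<dots> \<longleftrightarrow> ad (\<lambda>d. x d - y d) = (\<lambda>w d. 0)"
    using psi0_of_eq_0_iff[OF Lam_E_diff[OF x y]] ad_eq_0_iff[OF Lam_E_diff[OF x y]] by simp
  also have "\<dots> \<longleftrightarrow> ad x = ad y"
    by (simp add: ad_diff fun_eq_iff)
  finally show ?thesis .
qed

section \<open>The bracket on \<open>Im \<psi>\<^sub>0\<close>\<close>

definition parallel :: "'a \<Rightarrow> ('v,'a) path set" where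
  "parallel b = {g. (arr src b, g) \<in> Q1_B}"

lemma finite_parallel: "finite (parallel b)"
proof -
  have "parallel b \<subseteq> B" unfolding parallel_def Q1B_def by auto
  then show ?thesis using finite_B finite_subset by blast
qed

lemma parallelD: "g \<in> parallel b \<Longrightarrow> g \<in> B \<and> psrc g = src b \<and> ptgt tgt g = tgt b"
  unfolding parallel_def Q1B_def by auto

lemma sum_Q1_B_fibre:
  "(\<Sum>q\<in>Q1_B. if fst q = arr src b then F q else 0) = (\<Sum>g\<in>parallel b. F (arr src b, g))"
proof -
  have "(\<Sum>q\<in>Q1_B. if fst q = arr src b then F q else 0) = (\<Sum>q\<in>{q \<in> Q1_B. fst q = arr src b}. F q)"
    by (rule sum.inter_filter[symmetric]) (rule finite_Q1_B)
  also have "{q \<in> Q1_B. fst q = arr src b} = (\<lambda>g. (arr src b, g)) ` parallel b"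
    unfolding parallel_def by force
  also have "(\<Sum>q\<in>(\<lambda>g. (arr src b, g)) ` parallel b. F q) = (\<Sum>g\<in>parallel b. F (arr src b, g))"
    by (rule sum.reindex_cong[OF _ refl]) (auto simp: inj_on_def)
  finally show ?thesis .
qed

lemma commutator_arrow_expand:
  fixes y :: "('v,'a) path \<Rightarrow> 'k::field"
  assumes "y \<in> Lam_E" "b \<in> Q1"
  shows "(\<lambda>d. \<Sum>g\<in>parallel b. commutator (pt (arr src b)) y g * pt g d) = commutator (pt (arr src b)) y"
  using commutator_arrow_support[OF assms]
  by (intro sum_pt_support[OF finite_parallel]) (simp add: parallel_def)

definition path_prefix :: "('v,'a) path \<Rightarrow> nat \<Rightarrow> ('v,'a) path" where
  "path_prefix e i = (fst e, take i (snd e))"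

definition path_suffix :: "('v,'a) path \<Rightarrow> nat \<Rightarrow> ('v,'a) path" where
  "path_suffix e i = (ptgt tgt (path_prefix e i), drop i (snd e))"

lemma pcat_suffix_prefix: "pcat (path_suffix e i) (path_prefix e i) = e"
  and ptgt_prefix_eq_psrc_suffix: "ptgt tgt (path_prefix e i) = psrc (path_suffix e i)"
  by (simp_all add: pcat_def path_suffix_def path_prefix_def psrc_def)

lemma prefix_suffix_in_B: "e \<in> B \<Longrightarrow> path_prefix e i \<in> B \<and> path_suffix e i \<in> B"
  using B_pcatD[of "path_suffix e i" "path_prefix e i"] pcat_suffix_prefix ptgt_prefix_eq_psrc_suffix
  by simp

lemma ptgt_prefix:
  assumes e: "e \<in> B" and i: "i < length (snd e)"
  shows "ptgt tgt (path_prefix e i) = src (snd e ! i)"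
proof (cases i)
  case 0
  then show ?thesis using B_imp_valid[OF e] i unfolding valid_path_def
    by (auto simp: path_prefix_def ptgt_def hd_conv_nth)
next
  case (Suc j)
  have "tgt (snd e ! j) = src (snd e ! Suc j)"
    using B_imp_valid[OF e] i Suc unfolding valid_path_def by auto
  moreover have "take i (snd e) = take j (snd e) @ [snd e ! j]"
    using Suc i by (simp add: take_Suc_conv_app_nth)
  ultimately show ?thesis using Suc by (simp add: path_prefix_def ptgt_def)
qed

lemma ptgt_prefix_Suc: "i < length (snd e) \<Longrightarrow> ptgt tgt (path_prefix e (Suc i)) = tgt (snd e ! i)"
  by (simp add: path_prefix_def ptgt_def take_Suc_conv_app_nth)

lemma pt_suffix_step:
  assumes e: "e \<in> B" and i: "i < length (snd e)"
  shows "pt (path_suffix e i) = pt (path_suffix e (Suc i)) \<cdot> pt (arr src (snd e ! i))"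
proof -
  have "ptgt tgt (arr src (snd e ! i)) = psrc (path_suffix e (Suc i))"
    using ptgt_prefix_Suc[OF i] by (simp add: path_suffix_def psrc_def)
  moreover have "pcat (path_suffix e (Suc i)) (arr src (snd e ! i)) = path_suffix e i"
    using ptgt_prefix[OF e i] i by (simp add: pcat_def path_suffix_def arr_def Cons_nth_drop_Suc)
  ultimately show ?thesis using prefix_suffix_in_B[OF e] by (simp add: mult_pt_pt)
qed

lemma pt_prefix_step:
  assumes e: "e \<in> B" and i: "i < length (snd e)"
  shows "pt (path_prefix e (Suc i)) = pt (arr src (snd e ! i)) \<cdot> pt (path_prefix e i)"
proof -
  have "pcat (arr src (snd e ! i)) (path_prefix e i) = path_prefix e (Suc i)"
    using i by (simp add: pcat_def path_prefix_def arr_def take_Suc_conv_app_nth)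
  then show ?thesis using ptgt_prefix[OF e i] prefix_suffix_in_B[OF e] by (simp add: mult_pt_pt)
qed

lemma pt_replace:
  assumes e: "e \<in> B" and i: "i < length (snd e)" and g: "g \<in> parallel (snd e ! i)"
  shows "((pt (path_suffix e (Suc i)) \<cdot> pt g) \<cdot> pt (path_prefix e i)) d =
         (if repl e i g \<in> B \<and> d = repl e i g then 1 else (0::'k::field))"
proof -
  have repl: "repl e i g = pcat (path_suffix e (Suc i)) (pcat g (path_prefix e i))"
    by (simp add: repl_def pcat_def path_suffix_def path_prefix_def)
  have c1: "ptgt tgt (path_prefix e i) = psrc g"
    using ptgt_prefix[OF e i] parallelD[OF g] by simp
  have c2: "ptgt tgt (pcat g (path_prefix e i)) = psrc (path_suffix e (Suc i))"
    using ptgt_pcat[OF c1] parallelD[OF g] ptgt_prefix_Suc[OF i] by (simp add: path_suffix_def psrc_def)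
  have "((pt (path_suffix e (Suc i)) \<cdot> pt g) \<cdot> pt (path_prefix e i) :: ('v,'a) path \<Rightarrow> 'k)
      = pt (path_suffix e (Suc i)) \<cdot> (pt g \<cdot> pt (path_prefix e i))"
    by (rule mult_assoc)
  also have "\<dots> = (if repl e i g \<in> B then pt (repl e i g) else (\<lambda>_. 0))"
  proof (cases "pcat g (path_prefix e i) \<in> B")
    case True
    then show ?thesis using c1 c2 by (simp add: mult_pt_pt repl)
  next
    case False
    then have "repl e i g \<notin> B" using B_pcatD[OF _ c2] by (auto simp: repl)
    then show ?thesis using False c1 by (simp add: mult_pt_pt mult_zero_right)
  qed
  finally show ?thesis by (simp add: pt_def)
qed

definition subst_coeff :: "('v,'a) path \<Rightarrow> 'a \<Rightarrow> ('v,'a) path \<Rightarrow> ('v,'a) path \<Rightarrow> 'k::field" where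
  "subst_coeff eps a g d =
     (\<Sum>i<length (snd eps). if snd eps ! i = a \<and> repl eps i g \<in> B \<and> d = repl eps i g then 1 else 0)"

lemma subst_pair_eq:
  "subst_pair B eta eps a g r = (if fst r = eta then subst_coeff eps a g (snd r) else 0)"
proof -
  have I: "{i. i < length (snd eps) \<and> snd eps ! i = a \<and> repl eps i g \<in> B}
      = {i \<in> {..<length (snd eps)}. snd eps ! i = a \<and> repl eps i g \<in> B}" by auto
  have "subst_pair B eta eps a g r
      = (\<Sum>i<length (snd eps). if snd eps ! i = a \<and> repl eps i g \<in> B then pt (eta, repl eps i g) r else 0)"
    unfolding subst_pair_def I by (rule sum.inter_filter) simp
  also have "\<dots> = (if fst r = eta then subst_coeff eps a g (snd r) else 0)"
    by (cases "fst r = eta") (auto simp: subst_coeff_def pt_def prod_eq_iff intro!: sum.cong sum.neutral)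
  finally show ?thesis .
qed

lemma sum_psi0_of_subst_at:
  fixes x :: "('v,'a) path \<Rightarrow> 'k::field"
  assumes x: "x \<in> Lam_E" and e: "e \<in> B" and i: "i < length (snd e)"
  shows "(\<Sum>p\<in>Q1_B. psi0_of x p *
            (if snd e ! i = hd (snd (fst p)) \<and> repl e i (snd p) \<in> B \<and> d = repl e i (snd p) then 1 else 0))
       = ((pt (path_suffix e (Suc i)) \<cdot> commutator (pt (arr src (snd e ! i))) x) \<cdot> pt (path_prefix e i)) d"
    (is "(\<Sum>p\<in>Q1_B. psi0_of x p * ?C p) = _")
proof -
  let ?a = "snd e ! i"
  let ?c = "commutator (pt (arr src ?a)) x"
  let ?S = "pt (path_suffix e (Suc i))" and ?P = "pt (path_prefix e i)"
  have "(\<Sum>p\<in>Q1_B. psi0_of x p * ?C p) = (\<Sum>p\<in>Q1_B. if fst p = arr src ?a then psi0_of x p * ?C p else 0)"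
    by (rule sum.cong) (auto simp: Q1B_def arr_def)
  also have "\<dots> = (\<Sum>g\<in>parallel ?a. psi0_of x (arr src ?a, g) * ?C (arr src ?a, g))"
    by (rule sum_Q1_B_fibre)
  also have "\<dots> = (\<Sum>g\<in>parallel ?a. ?c g * ((?S \<cdot> pt g) \<cdot> ?P) d)"
    by (intro sum.cong refl) (simp add: psi0_of_apply[OF x] parallel_def pt_replace[OF e i] arr_def)
  also have "\<dots> = ((?S \<cdot> (\<lambda>q. \<Sum>g\<in>parallel ?a. ?c g * pt g q)) \<cdot> ?P) d"
    by (rule mult_sum_middle[OF finite_parallel, symmetric])
  also have "\<dots> = ((?S \<cdot> ?c) \<cdot> ?P) d"
    by (simp only: commutator_arrow_expand[OF x arrow_in_Q1[OF e i]])
  finally show ?thesis .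
qed

lemma mult_suffix_prefix_ends:
  fixes x :: "('v,'a) path \<Rightarrow> 'k::field"
  assumes x: "x \<in> Lam_E" and e: "e \<in> B"
  shows "(pt (path_suffix e 0) \<cdot> x) \<cdot> pt (path_prefix e 0) = pt e \<cdot> x"
    and "(pt (path_suffix e (length (snd e))) \<cdot> x) \<cdot> pt (path_prefix e (length (snd e))) = x \<cdot> pt e"
proof -
  obtain v as where ev: "e = (v, as)" by (cases e)
  have "pt e \<cdot> pt (v, []) = pt e" using e ev by (simp add: mult_pt_pt ptgt_def psrc_def pcat_def)
  then have "(pt e \<cdot> x) \<cdot> pt (v, []) = pt e \<cdot> x"
    by (metis Lam_E_vertex_commute[OF x] mult_assoc)
  then show "(pt (path_suffix e 0) \<cdot> x) \<cdot> pt (path_prefix e 0) = pt e \<cdot> x"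
    using ev by (simp add: path_suffix_def path_prefix_def ptgt_def)
  have "pt (ptgt tgt e, []) \<cdot> pt e = pt e" using e ev by (simp add: mult_pt_pt psrc_def pcat_def)
  then have "(pt (ptgt tgt e, []) \<cdot> x) \<cdot> pt e = x \<cdot> pt e"
    by (metis Lam_E_vertex_commute[OF x] mult_assoc)
  then show "(pt (path_suffix e (length (snd e))) \<cdot> x) \<cdot> pt (path_prefix e (length (snd e))) = x \<cdot> pt e"
    using ev by (simp add: path_suffix_def path_prefix_def)
qed

text \<open>Telescoping along the arrows of \<open>e\<close>: \<open>\<psi>\<^sub>0(x)\<close>, extended to \<open>e\<close> by the Leibniz rule, gives
  \<open>[e, x]\<close>.\<close>

lemma sum_psi0_of_subst_coeff:
  fixes x :: "('v,'a) path \<Rightarrow> 'k::field"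
  assumes x: "x \<in> Lam_E" and e: "e \<in> B"
  shows "(\<Sum>p\<in>Q1_B. psi0_of x p * subst_coeff e (hd (snd (fst p))) (snd p) d) = commutator (pt e) x d"
proof -
  let ?n = "length (snd e)"
  let ?T = "\<lambda>i. ((pt (path_suffix e i) \<cdot> x) \<cdot> pt (path_prefix e i)) d"
  have "(\<Sum>p\<in>Q1_B. psi0_of x p * subst_coeff e (hd (snd (fst p))) (snd p) d)
      = (\<Sum>i<?n. \<Sum>p\<in>Q1_B. psi0_of x p *
            (if snd e ! i = hd (snd (fst p)) \<and> repl e i (snd p) \<in> B \<and> d = repl e i (snd p) then 1 else 0))"
    unfolding subst_coeff_def sum_distrib_left by (rule sum.swap)
  also have "\<dots> = (\<Sum>i<?n. ?T i - ?T (Suc i))"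
  proof (rule sum.cong[OF refl])
    fix i assume "i \<in> {..<?n}"
    then have i: "i < ?n" by simp
    show "(\<Sum>p\<in>Q1_B. psi0_of x p *
            (if snd e ! i = hd (snd (fst p)) \<and> repl e i (snd p) \<in> B \<and> d = repl e i (snd p) then 1 else 0))
        = ?T i - ?T (Suc i)"
      unfolding sum_psi0_of_subst_at[OF x e i] pt_suffix_step[OF e i] pt_prefix_step[OF e i]
      by (simp add: mult_bilinear mult_assoc)
  qed
  also have "\<dots> = ?T 0 - ?T ?n" by (rule sum_lessThan_telescope')
  finally show ?thesis using mult_suffix_prefix_ends[OF x e] by simp
qed

lemma bracket1_half_psi0_of:
  fixes x y :: "('v,'a) path \<Rightarrow> 'k::field"
  assumes x: "x \<in> Lam_E" and y: "y \<in> Lam_E"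
  shows "(\<Sum>p\<in>Q1_B. \<Sum>q\<in>Q1_B. psi0_of x p * psi0_of y q * subst_pair B (fst q) (snd q) (hd (snd (fst p))) (snd p) r)
       = (if \<exists>b\<in>Q1. fst r = arr src b then commutator (commutator (pt (fst r)) y) x (snd r) else 0)"
proof -
  have "(\<Sum>p\<in>Q1_B. \<Sum>q\<in>Q1_B. psi0_of x p * psi0_of y q * subst_pair B (fst q) (snd q) (hd (snd (fst p))) (snd p) r)
      = (\<Sum>q\<in>Q1_B. if fst q = fst r then
           psi0_of y q * (\<Sum>p\<in>Q1_B. psi0_of x p * subst_coeff (snd q) (hd (snd (fst p))) (snd p) (snd r))
         else 0)"
    by (subst sum.swap) (auto simp: subst_pair_eq sum_distrib_left mult_ac intro!: sum.cong)
  also have "\<dots> = (\<Sum>q\<in>Q1_B. if fst q = fst r then psi0_of y q * commutator (pt (snd q)) x (snd r) else 0)"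
  proof (intro sum.cong refl)
    fix q assume "q \<in> Q1_B"
    then have "snd q \<in> B" unfolding Q1B_def by auto
    then show "(if fst q = fst r then psi0_of y q * (\<Sum>p\<in>Q1_B. psi0_of x p * subst_coeff (snd q) (hd (snd (fst p))) (snd p) (snd r)) else 0)
        = (if fst q = fst r then psi0_of y q * commutator (pt (snd q)) x (snd r) else 0)"
      by (simp add: sum_psi0_of_subst_coeff[OF x])
  qed
  also have "\<dots> = (if \<exists>b\<in>Q1. fst r = arr src b then commutator (commutator (pt (fst r)) y) x (snd r) else 0)"
  proof (cases "\<exists>b\<in>Q1. fst r = arr src b")
    case True
    then obtain b where b: "b \<in> Q1" "fst r = arr src b" by blast
    let ?c = "commutator (pt (arr src b)) y"
    have "(\<Sum>q\<in>Q1_B. if fst q = fst r then psi0_of y q * commutator (pt (snd q)) x (snd r) else 0)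
        = (\<Sum>g\<in>parallel b. ?c g * commutator (pt g) x (snd r))"
      unfolding b(2) sum_Q1_B_fibre by (intro sum.cong refl) (simp add: psi0_of_apply[OF y] parallel_def)
    also have "\<dots> = commutator (\<lambda>q. \<Sum>g\<in>parallel b. ?c g * pt g q) x (snd r)"
      by (rule commutator_sum_left[OF finite_parallel, symmetric])
    also have "\<dots> = commutator ?c x (snd r)"
      by (simp only: commutator_arrow_expand[OF y b(1)])
    finally show ?thesis using b by auto
  next
    case False
    then show ?thesis by (auto simp: Q1B_def intro!: sum.neutral)
  qed
  finally show ?thesis .
qed

text \<open>By the previous lemma both sides reduce to the Jacobi identity for a commutator with an arrow.\<close>

lemma bracket1_psi0_of:
  fixes x y :: "('v,'a) path \<Rightarrow> 'k::field"
  assumes x: "x \<in> Lam_E" and y: "y \<in> Lam_E"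
  shows "bracket1 Q1 src tgt B (psi0_of x) (psi0_of y) = psi0_of (commutator y x)"
proof (rule ext)
  fix r :: "('v,'a) path \<times> ('v,'a) path"
  let ?H = "\<lambda>x y. \<Sum>p\<in>Q1_B. \<Sum>q\<in>Q1_B. psi0_of x p * psi0_of y q * subst_pair B (fst q) (snd q) (hd (snd (fst p))) (snd p) r"
  have yx: "commutator y x \<in> Lam_E" by (rule Lam_E_commutator[OF y x])
  have "bracket1 Q1 src tgt B (psi0_of x) (psi0_of y) r = ?H x y - ?H y x"
    unfolding bracket1_def brb_def
    by (subst (3) sum.swap) (simp add: right_diff_distrib sum_subtractf mult_ac)
  also have "\<dots> = psi0_of (commutator y x) r"
  proof (cases "\<exists>b\<in>Q1. fst r = arr src b")
    case True
    then obtain b where b: "b \<in> Q1" "fst r = arr src b" by blast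
    have "?H x y - ?H y x = commutator (pt (arr src b)) (commutator y x) (snd r)"
      unfolding bracket1_half_psi0_of[OF x y] bracket1_half_psi0_of[OF y x] using b
      by (simp add: mult_bilinear mult_assoc algebra_simps)
    also have "\<dots> = psi0_of (commutator y x) r"
      using commutator_arrow_support[OF yx b(1), of "snd r"] b
      by (cases r) (auto simp: psi0_of_apply[OF yx])
    finally show ?thesis .
  next
    case False
    then have "r \<notin> Q1_B" unfolding Q1B_def by auto
    then show ?thesis using False
      by (simp add: bracket1_half_psi0_of[OF x y] bracket1_half_psi0_of[OF y x] psi0_of_apply[OF yx])
  qed
  finally show "bracket1 Q1 src tgt B (psi0_of x) (psi0_of y) r = psi0_of (commutator y x) r" .
qed

text \<open>The isomorphism sends \<open>\<psi>\<^sub>0(x)\<close> to \<open>-ad x\<close>; the sign turns the opposite commutator of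
  \<open>\<Lambda>\<^sup>E\<close> back into the commutator of derivations.\<close>

theorem Im_psi0_lie_iso_Ad_E:
  "\<exists>f. lie_iso (Im_psi0 Q0 Q1 src tgt B :: ('v,'a,'k::field) pvec set) (bracket1 Q1 src tgt B)
              (Ad_E B tgt) comm_bracket f"
proof (rule lie_iso_of_same_fibres[where L = Lam_E and g = psi0_of and h = "\<lambda>x. ad (\<lambda>d. - x d)"
      and br = "\<lambda>x y. commutator y x"])
  show "psi0_of ` Lam_E = (Im_psi0 Q0 Q1 src tgt B :: ('v,'a,'k) pvec set)"
    by (rule Im_psi0_eq[symmetric])
  have "ad x \<in> (\<lambda>x. ad (\<lambda>d. - x d)) ` Lam_E" if "x \<in> Lam_E" for x :: "('v,'a) path \<Rightarrow> 'k"
    using Lam_E_neg[OF that] by (auto intro!: image_eqI[of _ _ "\<lambda>d. - x d"])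
  then show "(\<lambda>x. ad (\<lambda>d. - x d)) ` Lam_E = (Ad_E B tgt :: (_ \<Rightarrow> _ \<Rightarrow> 'k) set)"
    unfolding Ad_E_eq using Lam_E_neg by blast
next
  fix x y :: "('v,'a) path \<Rightarrow> 'k"
  assume x: "x \<in> Lam_E" and y: "y \<in> Lam_E"
  show "psi0_of x = psi0_of y \<longleftrightarrow> ad (\<lambda>d. - x d) = ad (\<lambda>d. - y d)"
    unfolding psi0_of_eq_iff_ad_eq[OF x y] by (simp add: ad_neg fun_eq_iff)
  show "psi0_of (commutator y x) = bracket1 Q1 src tgt B (psi0_of x) (psi0_of y)"
    by (rule bracket1_psi0_of[OF x y, symmetric])
  show "ad (\<lambda>d. - (x d + y d)) = (\<lambda>u d. ad (\<lambda>d. - x d) u d + ad (\<lambda>d. - y d) u d)"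
    by (simp add: ad_map_def mult_bilinear fun_eq_iff)
  show "ad (\<lambda>d. - commutator y x d) = comm_bracket (ad (\<lambda>d. - x d)) (ad (\<lambda>d. - y d))"
    by (simp add: comm_bracket_ad mult_bilinear)
qed (simp_all add: Lam_E_add Lam_E_scale Lam_E_commutator psi0_of_add psi0_of_scale ad_neg ad_scale)

end

theorem corollary1p9:
  fixes Q0 :: "'v set" and Q1 :: "'a set" and src tgt :: "'a \<Rightarrow> 'v"
    and Z :: "('v,'a) path set"
  assumes k_closed: "alg_closed TYPE('k::field)"
    and fin_Q0: "finite Q0" and fin_Q1: "finite Q1"
    and arrows: "\<forall>a \<in> Q1. src a \<in> Q0 \<and> tgt a \<in> Q0"
    and Z_paths: "\<forall>p \<in> Z. valid_path Q0 Q1 src tgt p \<and> length (snd p) \<ge> 2"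
    and Z_minimal: "\<forall>p \<in> Z. \<forall>q \<in> Z. sublist (snd q) (snd p) \<longrightarrow> q = p"
    and fin_dim: "finite (Bset Q0 Q1 src tgt Z)"
  shows "\<exists>f. lie_iso (Im_psi0 Q0 Q1 src tgt (Bset Q0 Q1 src tgt Z) :: ('v,'a,'k) pvec set)
                    (bracket1 Q1 src tgt (Bset Q0 Q1 src tgt Z))
                    (Ad_E (Bset Q0 Q1 src tgt Z) tgt)
                    comm_bracket f"
proof -
  interpret monomial_algebra Q0 Q1 src tgt Z
    using arrows Z_paths fin_dim fin_Q1 fin_Q0 by unfold_locales auto
  show ?thesis by (rule Im_psi0_lie_iso_Ad_E)
qed

end
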